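(* For any RES-graph $(G,\gamma,b)$, the maximum number of non-zero circuits in a flooding of $(G,\gamma,b)$ equals $\tilde{\nu}(G,\gamma,b)$.
   Context: Graphs are finite and may have loops and multiple edges. Each edge consists of two half-edges; each half-edge is incident to a vertex, and a loop contributes $2$ to the degree of its vertex. An arc is an ordered pair $(h_1,h_2)$ of half-edges forming an edge; its tail is the vertex of $h_1$ and its head is the vertex of $h_2$. A trail is a sequence of arcs whose edges are pairwise distinct and such that the head of each arc (other than the last) is the tail of the next. Its tail and head are the tail of its first arc and the head of its last arc. A circuit is a trail whose head equals its tail. A circuit hits $v$ if it contains an arc incident to $v$. A circuit-decomposition of $G$ is a collection of circuits using every edge of $G$ exactly once. A graph is Eulerian if it is connected and every vertex has even degree. A signature is a function $\gamma:E(G)\to\mathbb{Z}_2$. The weight of a trail is the $\mathbb{Z}_2$-sum of $\gamma$ over its edges, and a trail is zero or non-zero accordingly. An RES-graph is a triple $(G,\gamma,b)$ where $G$ is an Eulerian graph, $\gamma$ is a signature of $G$, and $b\in V(G)$. The flooding number $\tilde{\nu}(G,\gamma,b)$ is the maximum size of a circuit-decomposition in which every circuit is non-zero and hits $b$; it is $0$ if none exists. A flooding of $(G,\gamma,b)$ is a circuit-decomposition of $G$ of size $\deg(b)/2$ in which every circuit has $b$ as its tail and its head. *)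

theory Defs
  imports Main "HOL-Library.Z2"
begin

(* A graph is given by a vertex set V, an edge set E and, for every edge e,
   its two half-edges (e,True) and (e,False); the half-edge (e,i) is incident
   to the vertex endp e i.  Loops (endp e True = endp e False) and multiple
   edges are allowed. *)

definition graph :: "'v set \<Rightarrow> 'e set \<Rightarrow> ('e \<Rightarrow> bool \<Rightarrow> 'v) \<Rightarrow> bool" where
  "graph V E endp \<longleftrightarrow> finite V \<and> finite E \<and> (\<forall>e\<in>E. \<forall>i. endp e i \<in> V)"

(* degree = number of half-edges incident to v; a loop contributes 2 *)
definition deg :: "'e set \<Rightarrow> ('e \<Rightarrow> bool \<Rightarrow> 'v) \<Rightarrow> 'v \<Rightarrow> nat" where
  "deg E endp v = card {h. fst h \<in> E \<and> endp (fst h) (snd h) = v}"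

definition connected_graph :: "'v set \<Rightarrow> 'e set \<Rightarrow> ('e \<Rightarrow> bool \<Rightarrow> 'v) \<Rightarrow> bool" where
  "connected_graph V E endp \<longleftrightarrow> V \<noteq> {} \<and>
     (\<forall>u\<in>V. \<forall>v\<in>V.
        (u, v) \<in> ({(endp e True, endp e False) | e. e \<in> E}
                   \<union> {(endp e False, endp e True) | e. e \<in> E})\<^sup>*)"

definition eulerian :: "'v set \<Rightarrow> 'e set \<Rightarrow> ('e \<Rightarrow> bool \<Rightarrow> 'v) \<Rightarrow> bool" where
  "eulerian V E endp \<longleftrightarrow> graph V E endp \<and> connected_graph V E endp
     \<and> (\<forall>v\<in>V. even (deg E endp v))"

(* An arc is an ordered pair of half-edges ((e,i),(e,\<not>i)) forming the edge e;
   we represent it by (e,i).  Its tail is the vertex of (e,i), its head the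
   vertex of (e,\<not>i). *)
type_synonym 'e arc = "'e \<times> bool"

definition arc_tail :: "('e \<Rightarrow> bool \<Rightarrow> 'v) \<Rightarrow> 'e arc \<Rightarrow> 'v" where
  "arc_tail endp a = endp (fst a) (snd a)"

definition arc_head :: "('e \<Rightarrow> bool \<Rightarrow> 'v) \<Rightarrow> 'e arc \<Rightarrow> 'v" where
  "arc_head endp a = endp (fst a) (\<not> snd a)"

definition trail :: "'e set \<Rightarrow> ('e \<Rightarrow> bool \<Rightarrow> 'v) \<Rightarrow> 'e arc list \<Rightarrow> bool" where
  "trail E endp t \<longleftrightarrow> t \<noteq> [] \<and> set (map fst t) \<subseteq> E \<and> distinct (map fst t) \<and>
     (\<forall>k. Suc k < length t \<longrightarrow> arc_head endp (t ! k) = arc_tail endp (t ! Suc k))"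

definition trail_tail :: "('e \<Rightarrow> bool \<Rightarrow> 'v) \<Rightarrow> 'e arc list \<Rightarrow> 'v" where
  "trail_tail endp t = arc_tail endp (hd t)"

definition trail_head :: "('e \<Rightarrow> bool \<Rightarrow> 'v) \<Rightarrow> 'e arc list \<Rightarrow> 'v" where
  "trail_head endp t = arc_head endp (last t)"

definition circuit :: "'e set \<Rightarrow> ('e \<Rightarrow> bool \<Rightarrow> 'v) \<Rightarrow> 'e arc list \<Rightarrow> bool" where
  "circuit E endp c \<longleftrightarrow> trail E endp c \<and> trail_head endp c = trail_tail endp c"

definition hits :: "('e \<Rightarrow> bool \<Rightarrow> 'v) \<Rightarrow> 'e arc list \<Rightarrow> 'v \<Rightarrow> bool" where
  "hits endp c v \<longleftrightarrow> (\<exists>a\<in>set c. arc_tail endp a = v \<or> arc_head endp a = v)"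

definition circuit_decomposition ::
  "'e set \<Rightarrow> ('e \<Rightarrow> bool \<Rightarrow> 'v) \<Rightarrow> 'e arc list list \<Rightarrow> bool" where
  "circuit_decomposition E endp D \<longleftrightarrow>
     (\<forall>c\<in>set D. circuit E endp c) \<and>
     distinct (concat (map (map fst) D)) \<and> set (concat (map (map fst) D)) = E"

definition weight :: "('e \<Rightarrow> bit) \<Rightarrow> 'e arc list \<Rightarrow> bit" where
  "weight \<gamma> t = sum_list (map (\<lambda>a. \<gamma> (fst a)) t)"

definition nonzero :: "('e \<Rightarrow> bit) \<Rightarrow> 'e arc list \<Rightarrow> bool" where
  "nonzero \<gamma> t \<longleftrightarrow> weight \<gamma> t \<noteq> 0"

definition res_graph ::
  "'v set \<Rightarrow> 'e set \<Rightarrow> ('e \<Rightarrow> bool \<Rightarrow> 'v) \<Rightarrow> ('e \<Rightarrow> bit) \<Rightarrow> 'v \<Rightarrow> bool" where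
  "res_graph V E endp \<gamma> b \<longleftrightarrow> eulerian V E endp \<and> b \<in> V"

definition good_decomposition ::
  "'e set \<Rightarrow> ('e \<Rightarrow> bool \<Rightarrow> 'v) \<Rightarrow> ('e \<Rightarrow> bit) \<Rightarrow> 'v \<Rightarrow> 'e arc list list \<Rightarrow> bool" where
  "good_decomposition E endp \<gamma> b D \<longleftrightarrow> circuit_decomposition E endp D \<and>
     (\<forall>c\<in>set D. nonzero \<gamma> c \<and> hits endp c b)"

definition flooding_number ::
  "'e set \<Rightarrow> ('e \<Rightarrow> bool \<Rightarrow> 'v) \<Rightarrow> ('e \<Rightarrow> bit) \<Rightarrow> 'v \<Rightarrow> nat" where
  "flooding_number E endp \<gamma> b =
     (if \<exists>D. good_decomposition E endp \<gamma> b D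
      then Max {length D | D. good_decomposition E endp \<gamma> b D} else 0)"

definition flooding :: "'e set \<Rightarrow> ('e \<Rightarrow> bool \<Rightarrow> 'v) \<Rightarrow> 'v \<Rightarrow> 'e arc list list \<Rightarrow> bool" where
  "flooding E endp b F \<longleftrightarrow> circuit_decomposition E endp F \<and>
     length F = deg E endp b div 2 \<and>
     (\<forall>c\<in>set F. trail_tail endp c = b \<and> trail_head endp c = b)"

definition num_nonzero :: "('e \<Rightarrow> bit) \<Rightarrow> 'e arc list list \<Rightarrow> nat" where
  "num_nonzero \<gamma> F = length (filter (nonzero \<gamma>) F)"

end

theory Submission
  imports Defs "HOL-Library.Multiset"
begin

(* A decomposition into circuits through b yields a flooding with at least as many non-zero
   circuits: rotate each circuit to start at b and cut it at every visit to b.  The pieces are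
   closed trails at b, deg(b)/2 in total, and a non-zero circuit leaves a non-zero piece because
   weights add.  Applied to a largest decomposition into non-zero circuits through b, this gives a
   flooding with at least flooding-number many non-zero circuits; if there is no such
   decomposition, any decomposition into circuits through b serves, and an Eulerian graph has one
   (split off circuits, then merge circuits sharing a vertex until, by connectivity, all pass
   through b).  Conversely, appending all zero circuits of a flooding to one of its non-zero
   circuits gives a decomposition into as many non-zero circuits through b. *)

lemma successively_iff_nth:
  "successively P xs \<longleftrightarrow> (\<forall>k. Suc k < length xs \<longrightarrow> P (xs ! k) (xs ! Suc k))"
proof (induction P xs rule: successively.induct)
  case (3 P x y xs)
  then show ?case by (auto simp: nth_Cons split: nat.splits)
qed auto

abbreviation linked :: "('e \<Rightarrow> bool \<Rightarrow> 'v) \<Rightarrow> 'e arc list \<Rightarrow> bool" where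
  "linked endp \<equiv> successively (\<lambda>a a'. arc_head endp a = arc_tail endp a')"

lemma trail_iff_linked:
  "trail E endp t \<longleftrightarrow> t \<noteq> [] \<and> set (map fst t) \<subseteq> E \<and> distinct (map fst t) \<and> linked endp t"
  unfolding trail_def successively_iff_nth ..

lemma trail_append_iff:
  "xs \<noteq> [] \<Longrightarrow> ys \<noteq> [] \<Longrightarrow>
   trail E endp (xs @ ys) \<longleftrightarrow> trail E endp xs \<and> trail E endp ys \<and>
     arc_head endp (last xs) = arc_tail endp (hd ys) \<and> set (map fst xs) \<inter> set (map fst ys) = {}"
  by (auto simp: trail_iff_linked successively_append_iff)

lemma circuit_mono: "circuit E endp c \<Longrightarrow> E \<subseteq> E' \<Longrightarrow> circuit E' endp c"
  by (auto simp: circuit_def trail_def)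

lemma circuit_decomposition_alt:
  "circuit_decomposition E endp D \<longleftrightarrow>
     (\<forall>c\<in>set D. circuit E endp c) \<and> distinct (map fst (concat D)) \<and> set (map fst (concat D)) = E"
  by (simp add: circuit_decomposition_def map_concat)

lemma circuit_decomposition_mset_cong:
  assumes "circuit_decomposition E endp D" and "mset (concat D') = mset (concat D)"
    and "\<forall>c\<in>set D'. circuit E endp c"
  shows "circuit_decomposition E endp D'"
proof -
  have "mset (map fst (concat D')) = mset (map fst (concat D))" using assms(2) by simp
  then show ?thesis using assms(1,3) mset_eq_setD mset_eq_imp_distinct_iff
    unfolding circuit_decomposition_alt by metis
qed

lemma mset_concat_remove1: "c \<in> set L \<Longrightarrow> mset (concat L) = mset c + mset (concat (remove1 c L))"
  by (induction L) auto

lemma mset_rotate: "mset (rotate n xs) = mset xs"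
proof (induction n)
  case (Suc n)
  then show ?case by (cases "rotate n xs") simp_all
qed simp

definition tail_count :: "('e \<Rightarrow> bool \<Rightarrow> 'v) \<Rightarrow> 'v \<Rightarrow> 'e arc list \<Rightarrow> nat" where
  "tail_count endp v t = length (filter (\<lambda>a. arc_tail endp a = v) t)"

definition head_count :: "('e \<Rightarrow> bool \<Rightarrow> 'v) \<Rightarrow> 'v \<Rightarrow> 'e arc list \<Rightarrow> nat" where
  "head_count endp v t = length (filter (\<lambda>a. arc_head endp a = v) t)"

definition incidences :: "('e \<Rightarrow> bool \<Rightarrow> 'v) \<Rightarrow> 'v \<Rightarrow> 'e \<Rightarrow> nat" where
  "incidences endp v e = card {i. endp e i = v}"

lemma tail_count_append [simp]: "tail_count endp v (xs @ ys) = tail_count endp v xs + tail_count endp v ys"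
  by (simp add: tail_count_def)

lemma head_count_append [simp]: "head_count endp v (xs @ ys) = head_count endp v xs + head_count endp v ys"
  by (simp add: head_count_def)

lemma tail_count_mset_cong: "mset xs = mset ys \<Longrightarrow> tail_count endp v xs = tail_count endp v ys"
  unfolding tail_count_def by (metis mset_filter size_mset)

lemma card_bool_Collect: "card {i::bool. P i} = (if P True then 1 else 0) + (if P False then 1 else 0)"
proof -
  have "{i. P i} = (if P True then {True} else {}) \<union> (if P False then {False} else {})"
    by (simp add: set_eq_iff) (metis (full_types))
  then show ?thesis by simp
qed

lemma incidences_arc:
  "incidences endp v (fst a) = (if arc_tail endp a = v then 1 else 0) + (if arc_head endp a = v then 1 else 0)"
  by (cases a; cases "snd a") (auto simp: incidences_def card_bool_Collect arc_tail_def arc_head_def)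

lemma deg_eq_sum_incidences: "finite E \<Longrightarrow> deg E endp v = (\<Sum>e\<in>E. incidences endp v e)"
proof -
  assume "finite E"
  moreover have "{h. fst h \<in> E \<and> endp (fst h) (snd h) = v} = Sigma E (\<lambda>e. {i. endp e i = v})"
    by auto
  ultimately show ?thesis by (simp add: deg_def incidences_def)
qed

lemma deg_outside_graph:
  assumes "graph V E endp" and "v \<notin> V"
  shows "deg E endp v = 0"
proof -
  have "incidences endp v e = 0" if "e \<in> E" for e
    using assms that by (auto simp: graph_def incidences_def card_bool_Collect)
  then show ?thesis using assms(1) by (simp add: deg_eq_sum_incidences graph_def)
qed

lemma linked_tail_head_balance:
  "linked endp t \<Longrightarrow> t \<noteq> [] \<Longrightarrow>
   tail_count endp v t + (if arc_head endp (last t) = v then 1 else 0)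
     = head_count endp v t + (if arc_tail endp (hd t) = v then 1 else 0)"
  by (induction "\<lambda>a a'. arc_head endp a = arc_tail endp a'" t rule: successively.induct)
     (auto simp: tail_count_def head_count_def)

lemma circuit_tail_count_eq_head_count: "circuit E endp c \<Longrightarrow> tail_count endp v c = head_count endp v c"
  using linked_tail_head_balance[of endp c v]
  by (auto simp: circuit_def trail_iff_linked trail_head_def trail_tail_def)

lemma tail_count_plus_head_count:
  "distinct (map fst t) \<Longrightarrow>
   tail_count endp v t + head_count endp v t = (\<Sum>e\<in>set (map fst t). incidences endp v e)"
proof (induction t)
  case (Cons a t)
  then show ?case using incidences_arc[of endp v a] by (auto simp: tail_count_def head_count_def)
qed (simp add: tail_count_def head_count_def)

lemma trail_length_le_card: "trail E endp t \<Longrightarrow> finite E \<Longrightarrow> length t \<le> card E"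
  by (metis card_mono distinct_card length_map trail_def)

(* A longest trail is closed: at an open end v it has used an odd number of the half-edges at v. *)
lemma circuit_exists:
  assumes fin: "finite E" and ne: "E \<noteq> {}" and even_deg: "\<forall>v. even (deg E endp v)"
  shows "\<exists>c. circuit E endp c"
proof -
  let ?L = "{length t | t. trail E endp t}"
  have fin_L: "finite ?L"
    by (rule finite_subset[of _ "{..card E}"]) (auto intro: trail_length_le_card[OF _ fin])
  obtain e where "e \<in> E" using ne by auto
  then have "trail E endp [(e, True)]" by (simp add: trail_def)
  then have "Max ?L \<in> ?L" using fin_L by (intro Max_in) blast+
  then obtain t where t: "trail E endp t" and t_max: "length t = Max ?L" by auto
  show ?thesis
  proof (rule ccontr)
    assume no_circuit: "\<not> ?thesis"
    define v where "v = arc_head endp (last t)"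
    have t_ne: "t \<noteq> []" and linked: "linked endp t" and dist: "distinct (map fst t)"
      and sub: "set (map fst t) \<subseteq> E"
      using t by (auto simp: trail_iff_linked)
    have "arc_tail endp (hd t) \<noteq> v" using no_circuit t
      by (auto simp: circuit_def trail_head_def trail_tail_def v_def)
    then have "tail_count endp v t + 1 = head_count endp v t"
      using linked_tail_head_balance[OF linked t_ne, of v] by (simp add: v_def)
    then have "(\<Sum>e\<in>set (map fst t). incidences endp v e) = 2 * tail_count endp v t + 1"
      using tail_count_plus_head_count[OF dist, of endp v] by linarith
    then have "odd (\<Sum>e\<in>set (map fst t). incidences endp v e)" by simp
    moreover have "deg E endp v = (\<Sum>e\<in>E - set (map fst t). incidences endp v e)
                                  + (\<Sum>e\<in>set (map fst t). incidences endp v e)"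
      unfolding deg_eq_sum_incidences[OF fin] by (rule sum.subset_diff[OF sub fin])
    ultimately have "odd (\<Sum>e\<in>E - set (map fst t). incidences endp v e)"
      using even_deg by (metis even_add)
    then obtain e' where e': "e' \<in> E - set (map fst t)" and "incidences endp v e' \<noteq> 0"
      by (metis dvd_0_right sum.neutral)
    then obtain i where i: "endp e' i = v" by (auto simp: incidences_def)
    have "trail E endp (t @ [(e', i)])"
      using t e' i t_ne by (auto simp: trail_iff_linked successively_append_iff arc_tail_def v_def)
    then have "length (t @ [(e', i)]) \<le> Max ?L" using fin_L by (intro Max_ge) blast+
    then show False using t_max by simp
  qed
qed

lemma circuit_decomposition_exists:
  "finite E \<Longrightarrow> \<forall>v. even (deg E endp v) \<Longrightarrow> \<exists>D. circuit_decomposition E endp D"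
proof (induction "card E" arbitrary: E rule: less_induct)
  case less
  show ?case
  proof (cases "E = {}")
    case True
    then show ?thesis by (intro exI[of _ "[]"]) (simp add: circuit_decomposition_alt)
  next
    case False
    obtain c where c: "circuit E endp c" using circuit_exists[OF less.prems(1) False less.prems(2)] by blast
    define E' where "E' = E - set (map fst c)"
    have sub: "set (map fst c) \<subseteq> E" and dist: "distinct (map fst c)" and "c \<noteq> []"
      using c by (auto simp: circuit_def trail_def)
    then have "E' \<subset> E" by (auto simp: E'_def neq_Nil_conv)
    then have smaller: "card E' < card E" using less.prems(1) by (rule psubset_card_mono[rotated])
    have fin': "finite E'" using less.prems(1) by (simp add: E'_def)
    have "even (deg E' endp v)" for v
    proof -
      have "deg E endp v = deg E' endp v + (\<Sum>e\<in>set (map fst c). incidences endp v e)"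
        unfolding deg_eq_sum_incidences[OF less.prems(1)] deg_eq_sum_incidences[OF fin']
        unfolding E'_def
        by (rule sum.subset_diff[OF sub less.prems(1)])
      moreover have "(\<Sum>e\<in>set (map fst c). incidences endp v e) = 2 * tail_count endp v c"
        using tail_count_plus_head_count[OF dist] circuit_tail_count_eq_head_count[OF c] by (metis mult_2)
      ultimately show ?thesis using less.prems(2) by (metis even_add even_mult_iff even_numeral)
    qed
    then obtain D where D: "circuit_decomposition E' endp D" using less.hyps[OF smaller fin'] by blast
    have "circuit_decomposition E endp (c # D)"
      using D c sub dist circuit_mono[of E' endp _ E]
      unfolding circuit_decomposition_alt by (auto simp: E'_def)
    then show ?thesis by blast
  qed
qed

lemma circuit_hits_imp_tail:
  assumes c: "circuit E endp c" and "hits endp c v"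
  shows "\<exists>k<length c. arc_tail endp (c ! k) = v"
proof -
  obtain k where k: "k < length c" and kv: "arc_tail endp (c ! k) = v \<or> arc_head endp (c ! k) = v"
    using assms(2) by (auto simp: hits_def in_set_conv_nth)
  consider "arc_tail endp (c ! k) = v" | "Suc k < length c" "arc_head endp (c ! k) = v"
    | "c ! k = last c" "arc_head endp (c ! k) = v"
    using k kv by (metis Suc_lessI diff_Suc_1 last_conv_nth less_zeroE list.size(3))
  then show ?thesis
  proof cases
    case 2
    then show ?thesis using c by (auto simp: circuit_def trail_def)
  next
    case 3
    then have "arc_tail endp (hd c) = v" using c by (auto simp: circuit_def trail_head_def trail_tail_def)
    moreover have "c \<noteq> []" using k by auto
    ultimately show ?thesis by (metis hd_conv_nth length_greater_0_conv)
  qed (use k in blast)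
qed

lemma circuit_rotate1:
  assumes "circuit E endp c" shows "circuit E endp (rotate1 c)"
proof (cases c)
  case (Cons a r)
  show ?thesis
  proof (cases "r = []")
    case False
    have "linked endp (a # r)" "arc_head endp (last r) = arc_tail endp a"
      using assms Cons False by (auto simp: circuit_def trail_iff_linked trail_head_def trail_tail_def)
    then have "linked endp (r @ [a])" "arc_head endp a = arc_tail endp (hd r)"
      using False by (auto simp: successively_append_iff successively_Cons)
    then show ?thesis using assms Cons False
      by (auto simp: circuit_def trail_iff_linked trail_head_def trail_tail_def)
  qed (use assms Cons in simp)
qed (use assms in simp)

lemma circuit_rotate: "circuit E endp c \<Longrightarrow> circuit E endp (rotate n c)"
  by (induction n) (simp_all add: circuit_rotate1)

lemma circuit_rotate_to:
  assumes c: "circuit E endp c" and "hits endp c v"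
  shows "\<exists>c'. circuit E endp c' \<and> mset c' = mset c \<and> trail_tail endp c' = v \<and> trail_head endp c' = v"
proof -
  obtain k where k: "k < length c" and kv: "arc_tail endp (c ! k) = v"
    using circuit_hits_imp_tail[OF assms] by blast
  then have "c \<noteq> []" by auto
  then have "trail_tail endp (rotate k c) = v"
    using k kv by (simp add: trail_tail_def hd_rotate_conv_nth)
  moreover have "circuit E endp (rotate k c)" using c by (rule circuit_rotate)
  ultimately show ?thesis by (intro exI[of _ "rotate k c"]) (simp add: circuit_def mset_rotate)
qed

lemma hits_edge: "(e, j) \<in> set c \<Longrightarrow> hits endp c (endp e k)"
  by (cases j; cases k) (force simp: hits_def arc_tail_def arc_head_def)+

(* Two circuits through a common vertex v, both rotated to start at v, concatenate to one circuit. *)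
lemma circuit_decomposition_merge:
  assumes D: "circuit_decomposition E endp D" and c1: "c1 \<in> set D" and c2: "c2 \<in> set D"
    and "c1 \<noteq> c2" and "hits endp c1 v" and "hits endp c2 v"
  shows "\<exists>D'. circuit_decomposition E endp D' \<and> length D' < length D"
proof -
  have "circuit E endp c1" "circuit E endp c2" using D c1 c2 by (auto simp: circuit_decomposition_alt)
  obtain c1' where
    c1': "circuit E endp c1'" "mset c1' = mset c1" "trail_tail endp c1' = v" "trail_head endp c1' = v"
    using circuit_rotate_to[OF \<open>circuit E endp c1\<close> \<open>hits endp c1 v\<close>] by blast
  obtain c2' where
    c2': "circuit E endp c2'" "mset c2' = mset c2" "trail_tail endp c2' = v" "trail_head endp c2' = v"
    using circuit_rotate_to[OF \<open>circuit E endp c2\<close> \<open>hits endp c2 v\<close>] by blast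
  define R where "R = remove1 c2 (remove1 c1 D)"
  have c2R: "c2 \<in> set (remove1 c1 D)" using c2 \<open>c1 \<noteq> c2\<close> by (simp add: in_set_remove1)
  define D' where "D' = (c1' @ c2') # R"
  have m: "mset (concat D') = mset (concat D)"
    unfolding D'_def R_def
    using mset_concat_remove1[OF c1] mset_concat_remove1[OF c2R] c1'(2) c2'(2)
    by (simp add: add.assoc)
  then have "distinct (map fst (concat D'))"
    using D unfolding circuit_decomposition_alt by (metis mset_eq_imp_distinct_iff mset_map)
  then have "distinct (map fst (c1' @ c2'))"
    unfolding D'_def by (metis concat.simps(2) distinct_append map_append)
  moreover have "c1' \<noteq> []" "c2' \<noteq> []" "linked endp c1'" "linked endp c2'"
    and "set (map fst c1') \<subseteq> E" "set (map fst c2') \<subseteq> E"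
    using c1'(1) c2'(1) by (auto simp: circuit_def trail_iff_linked)
  ultimately have "circuit E endp (c1' @ c2')"
    using c1'(3,4) c2'(3,4)
    by (simp add: circuit_def trail_iff_linked successively_append_iff trail_head_def trail_tail_def)
  moreover have "\<forall>c\<in>set R. circuit E endp c"
    using D unfolding R_def circuit_decomposition_alt by (meson notin_set_remove1)
  ultimately have "circuit_decomposition E endp D'"
    using circuit_decomposition_mset_cong[OF D m] by (simp add: D'_def)
  moreover have "length D' < length D"
  proof -
    have "length (remove1 c1 D) = length D - 1" "length R = length (remove1 c1 D) - 1"
      using c1 c2R by (simp_all add: R_def length_remove1)
    moreover have "0 < length (remove1 c1 D)" using length_pos_if_in_set[OF c2R] .
    ultimately show ?thesis by (simp add: D'_def)
  qed
  ultimately show ?thesis by blast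
qed

(* If no two circuits of D share a vertex, the vertices on circuits through b are closed under
   adjacency, so by connectivity every vertex, in particular one on any given circuit, is such. *)
lemma separated_decomposition_hits:
  assumes G: "graph V E endp" and conn: "connected_graph V E endp" and "b \<in> V"
    and D: "circuit_decomposition E endp D"
    and separated: "\<And>c1 c2 v. c1 \<in> set D \<Longrightarrow> c2 \<in> set D \<Longrightarrow> hits endp c1 v \<Longrightarrow> hits endp c2 v \<Longrightarrow> c1 = c2"
    and c: "c \<in> set D"
  shows "hits endp c b"
proof -
  define S where "S = {v. v = b \<or> (\<exists>c\<in>set D. hits endp c b \<and> hits endp c v)}"
  define R where "R = {(endp e True, endp e False) | e. e \<in> E} \<union> {(endp e False, endp e True) | e. e \<in> E}"
  have through_S: "hits endp c' b" if "c' \<in> set D" "hits endp c' y" "y \<in> S" for c' y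
  proof (cases "y = b")
    case False
    then obtain c'' where "c'' \<in> set D" "hits endp c'' b" "hits endp c'' y" using \<open>y \<in> S\<close> by (auto simp: S_def)
    then show ?thesis using separated[of c' c'' y] that by simp
  qed (use that in simp)
  have step: "z \<in> S" if "(y, z) \<in> R" and "y \<in> S" for y z
  proof -
    obtain e i k where "e \<in> E" and yz: "y = endp e i" "z = endp e k"
      using \<open>(y, z) \<in> R\<close> unfolding R_def by blast
    then have "e \<in> set (map fst (concat D))" using D by (simp add: circuit_decomposition_alt)
    then obtain c' a where c': "c' \<in> set D" and "a \<in> set c'" and "fst a = e" by auto
    then have "(e, snd a) \<in> set c'" by (metis prod.collapse)
    then have "hits endp c' y" "hits endp c' z" using hits_edge yz by metis+
    then show ?thesis using through_S[OF c'] \<open>y \<in> S\<close> c' by (auto simp: S_def)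
  qed
  have all_in_S: "v \<in> S" if "v \<in> V" for v
  proof -
    have "(b, v) \<in> R\<^sup>*" using conn \<open>b \<in> V\<close> that by (simp add: connected_graph_def R_def)
    then show ?thesis
    proof (induction rule: rtrancl_induct)
      case base
      then show ?case by (simp add: S_def)
    qed (rule step)
  qed
  have "circuit E endp c" using c D by (simp add: circuit_decomposition_alt)
  then have "c \<noteq> []" and "fst (hd c) \<in> E" by (cases c; auto simp: circuit_def trail_def)+
  then have "arc_tail endp (hd c) \<in> S" and "hits endp c (arc_tail endp (hd c))"
    using G all_in_S by (auto simp: graph_def arc_tail_def hits_def)
  then show ?thesis using through_S[OF c] by blast
qed

lemma circuit_decomposition_through:
  assumes G: "graph V E endp" and conn: "connected_graph V E endp" and b: "b \<in> V"
    and "circuit_decomposition E endp D"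
  shows "\<exists>D'. circuit_decomposition E endp D' \<and> (\<forall>c\<in>set D'. hits endp c b)"
  using assms(4)
proof (induction "length D" arbitrary: D rule: less_induct)
  case less
  show ?case
  proof (cases "\<exists>c1\<in>set D. \<exists>c2\<in>set D. \<exists>v. c1 \<noteq> c2 \<and> hits endp c1 v \<and> hits endp c2 v")
    case True
    then show ?thesis using circuit_decomposition_merge[OF less.prems] less.hyps by meson
  next
    case False
    then show ?thesis using separated_decomposition_hits[OF G conn b less.prems] less.prems by metis
  qed
qed

definition closed_trail_at :: "'e set \<Rightarrow> ('e \<Rightarrow> bool \<Rightarrow> 'v) \<Rightarrow> 'v \<Rightarrow> 'e arc list \<Rightarrow> bool" where
  "closed_trail_at E endp b t \<longleftrightarrow> trail E endp t \<and> trail_tail endp t = b \<and> trail_head endp t = b"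

lemma closed_trail_at_hits: "closed_trail_at E endp b p \<Longrightarrow> hits endp p b"
  by (cases p) (auto simp: closed_trail_at_def hits_def trail_tail_def trail_def)

lemma closed_trail_at_append:
  assumes "closed_trail_at E endp b p" and "closed_trail_at E endp b q" and "distinct (map fst (p @ q))"
  shows "closed_trail_at E endp b (p @ q)"
proof -
  have "p \<noteq> []" "q \<noteq> []" using assms(1,2) by (auto simp: closed_trail_at_def trail_def)
  then show ?thesis
    using assms by (auto simp: closed_trail_at_def trail_append_iff trail_head_def trail_tail_def)
qed

lemma closed_trail_at_concat:
  "\<forall>p\<in>set L. closed_trail_at E endp b p \<Longrightarrow> distinct (map fst (concat L)) \<Longrightarrow>
   concat L = [] \<or> closed_trail_at E endp b (concat L)"
proof (induction L)
  case (Cons p L)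
  have "closed_trail_at E endp b p" "distinct (map fst (p @ concat L))" using Cons.prems by auto
  moreover have "concat L = [] \<or> closed_trail_at E endp b (concat L)" using Cons by simp
  ultimately have "closed_trail_at E endp b (p @ concat L)"
    by (metis append_Nil2 closed_trail_at_append)
  then show ?case by simp
qed simp

lemma closed_trail_at_split:
  "closed_trail_at E endp b t \<Longrightarrow>
   \<exists>P. (\<forall>p\<in>set P. closed_trail_at E endp b p) \<and> concat P = t \<and> length P = tail_count endp b t"
proof (induction "length t" arbitrary: t rule: less_induct)
  case less
  have t: "trail E endp t" and tt: "trail_tail endp t = b" and th: "trail_head endp t = b"
    using less.prems by (auto simp: closed_trail_at_def)
  show ?case
  proof (cases "\<exists>k. 0 < k \<and> k < length t \<and> arc_tail endp (t ! k) = b")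
    case True
    then obtain k where k: "0 < k" "k < length t" and kb: "arc_tail endp (t ! k) = b" by blast
    have ne: "take k t \<noteq> []" "drop k t \<noteq> []" using k by auto
    have "trail E endp (take k t @ drop k t)" using t by simp
    then have "trail E endp (take k t)" "trail E endp (drop k t)"
      and "arc_head endp (last (take k t)) = arc_tail endp (hd (drop k t))"
      unfolding trail_append_iff[OF ne] by blast+
    moreover have "hd (take k t) = hd t" "last (drop k t) = last t" "hd (drop k t) = t ! k"
      using k by (auto simp: hd_drop_conv_nth)
    ultimately have "closed_trail_at E endp b (take k t)" "closed_trail_at E endp b (drop k t)"
      using tt th kb by (auto simp: closed_trail_at_def trail_tail_def trail_head_def)
    moreover have "length (take k t) < length t" "length (drop k t) < length t" using k by auto
    ultimately obtain P1 P2 where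
      "\<forall>p\<in>set P1. closed_trail_at E endp b p" "concat P1 = take k t" "length P1 = tail_count endp b (take k t)"
      "\<forall>p\<in>set P2. closed_trail_at E endp b p" "concat P2 = drop k t" "length P2 = tail_count endp b (drop k t)"
      using less.hyps by (metis (no_types, lifting))
    moreover have "tail_count endp b t = tail_count endp b (take k t) + tail_count endp b (drop k t)"
      by (metis append_take_drop_id tail_count_append)
    ultimately show ?thesis by (intro exI[of _ "P1 @ P2"]) auto
  next
    case False
    obtain a r where ar: "t = a # r" using t by (cases t) (auto simp: trail_def)
    have "arc_tail endp x \<noteq> b" if "x \<in> set r" for x
    proof -
      obtain j where "j < length r" "r ! j = x" using \<open>x \<in> set r\<close> by (meson in_set_conv_nth)
      then have "0 < Suc j" "Suc j < length t" "t ! Suc j = x" using ar by auto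
      then show ?thesis using False by blast
    qed
    then have "tail_count endp b t = 1" using tt ar by (simp add: tail_count_def trail_tail_def filter_False)
    then show ?thesis using less.prems by (intro exI[of _ "[t]"]) auto
  qed
qed

lemma weight_append [simp]: "weight \<gamma> (xs @ ys) = weight \<gamma> xs + weight \<gamma> ys"
  by (simp add: weight_def)

lemma weight_concat: "weight \<gamma> (concat P) = (\<Sum>p\<leftarrow>P. weight \<gamma> p)"
  by (induction P) (auto simp: weight_def)

lemma weight_mset_cong: "mset xs = mset ys \<Longrightarrow> weight \<gamma> xs = weight \<gamma> ys"
  unfolding weight_def by (simp flip: sum_mset_sum_list)

lemma num_nonzero_append [simp]: "num_nonzero \<gamma> (xs @ ys) = num_nonzero \<gamma> xs + num_nonzero \<gamma> ys"
  by (simp add: num_nonzero_def)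

lemma num_nonzero_pos_iff: "0 < num_nonzero \<gamma> P \<longleftrightarrow> (\<exists>p\<in>set P. nonzero \<gamma> p)"
  by (simp add: num_nonzero_def filter_empty_conv)

lemma nonzero_concat: "nonzero \<gamma> (concat P) \<Longrightarrow> \<exists>p\<in>set P. nonzero \<gamma> p"
  by (induction P) (auto simp: nonzero_def weight_def)

lemma closed_trails_from_circuits:
  "\<forall>c\<in>set D. circuit E endp c \<and> hits endp c b \<Longrightarrow>
   \<exists>F. (\<forall>p\<in>set F. closed_trail_at E endp b p) \<and> mset (concat F) = mset (concat D) \<and>
       length F = tail_count endp b (concat D) \<and> num_nonzero \<gamma> D \<le> num_nonzero \<gamma> F"
proof (induction D)
  case Nil
  then show ?case by (intro exI[of _ "[]"]) (simp add: num_nonzero_def tail_count_def)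
next
  case (Cons c D)
  obtain F where F: "\<forall>p\<in>set F. closed_trail_at E endp b p" "mset (concat F) = mset (concat D)"
      "length F = tail_count endp b (concat D)" "num_nonzero \<gamma> D \<le> num_nonzero \<gamma> F"
    using Cons by auto
  obtain c' where c': "circuit E endp c'" "mset c' = mset c" "trail_tail endp c' = b" "trail_head endp c' = b"
    using circuit_rotate_to Cons.prems by (metis list.set_intros(1))
  then obtain P where P: "\<forall>p\<in>set P. closed_trail_at E endp b p" "concat P = c'" "length P = tail_count endp b c'"
    using closed_trail_at_split by (metis circuit_def closed_trail_at_def)
  have "num_nonzero \<gamma> [c] \<le> num_nonzero \<gamma> P"
  proof (cases "nonzero \<gamma> c")
    case True
    then have "nonzero \<gamma> (concat P)" using P(2) weight_mset_cong[OF c'(2)] by (simp add: nonzero_def)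
    then have "0 < num_nonzero \<gamma> P" using nonzero_concat num_nonzero_pos_iff by blast
    then show ?thesis using True unfolding num_nonzero_def by (simp add: Suc_le_eq)
  qed (simp add: num_nonzero_def)
  moreover have "num_nonzero \<gamma> (c # D) = num_nonzero \<gamma> [c] + num_nonzero \<gamma> D"
    using num_nonzero_append[of \<gamma> "[c]" D] by simp
  ultimately show ?case using F P c'(2) tail_count_mset_cong[OF c'(2)]
    by (intro exI[of _ "P @ F"]) auto
qed

lemma flooding_from_decomposition:
  assumes fin: "finite E" and D: "circuit_decomposition E endp D" and through: "\<forall>c\<in>set D. hits endp c b"
  shows "\<exists>F. flooding E endp b F \<and> num_nonzero \<gamma> D \<le> num_nonzero \<gamma> F"
proof -
  have circuits: "\<forall>c\<in>set D. circuit E endp c" and dist: "distinct (map fst (concat D))"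
    and edges: "set (map fst (concat D)) = E" using D by (auto simp: circuit_decomposition_alt)
  obtain F where F: "\<forall>p\<in>set F. closed_trail_at E endp b p" "mset (concat F) = mset (concat D)"
       "length F = tail_count endp b (concat D)" "num_nonzero \<gamma> D \<le> num_nonzero \<gamma> F"
    using closed_trails_from_circuits[of D E endp b \<gamma>] circuits through by blast
  have "tail_count endp b (concat D) = head_count endp b (concat D)"
    using circuits
  proof (induction D)
    case Nil
    then show ?case by (simp add: tail_count_def head_count_def)
  next
    case (Cons c D)
    then show ?case using circuit_tail_count_eq_head_count[of E endp c b] by simp
  qed
  moreover have "tail_count endp b (concat D) + head_count endp b (concat D)
                 = (\<Sum>e\<in>set (map fst (concat D)). incidences endp b e)"
    by (rule tail_count_plus_head_count[OF dist])
  moreover have "\<dots> = deg E endp b" unfolding edges by (rule deg_eq_sum_incidences[OF fin, symmetric])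
  moreover have "\<forall>c\<in>set F. circuit E endp c" using F(1) by (simp add: closed_trail_at_def circuit_def)
  then have "circuit_decomposition E endp F" by (rule circuit_decomposition_mset_cong[OF D F(2)])
  ultimately have "flooding E endp b F" using F(1,3) by (auto simp: flooding_def closed_trail_at_def)
  then show ?thesis using F(4) by blast
qed

lemma mset_concat_filter:
  "mset (concat (filter P L)) + mset (concat (filter (\<lambda>x. \<not> P x) L)) = mset (concat L)"
  by (induction L) (auto simp: add_ac)

lemma good_decomposition_from_flooding:
  assumes F: "flooding E endp b F" and pos: "0 < num_nonzero \<gamma> F"
  shows "\<exists>D. good_decomposition E endp \<gamma> b D \<and> length D = num_nonzero \<gamma> F"
proof -
  have FD: "circuit_decomposition E endp F" and closed: "\<forall>p\<in>set F. closed_trail_at E endp b p"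
    using F by (auto simp: flooding_def closed_trail_at_def circuit_decomposition_def circuit_def)
  define Z where "Z = concat (filter (\<lambda>c. \<not> nonzero \<gamma> c) F)"
  obtain n rest where N: "filter (nonzero \<gamma>) F = n # rest"
    using pos by (cases "filter (nonzero \<gamma>) F") (auto simp: num_nonzero_def)
  then have "set (n # rest) = {x \<in> set F. nonzero \<gamma> x}" by (metis set_filter)
  then have n: "n \<in> set F" "nonzero \<gamma> n" and rest: "\<forall>r\<in>set rest. r \<in> set F \<and> nonzero \<gamma> r"
    by auto
  define D where "D = (Z @ n) # rest"
  have m: "mset (concat D) = mset (concat F)"
    using mset_concat_filter[of "nonzero \<gamma>" F] N by (simp add: D_def Z_def add_ac)
  then have "distinct (map fst (concat D))"
    using FD unfolding circuit_decomposition_alt by (metis mset_eq_imp_distinct_iff mset_map)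
  then have dist: "distinct (map fst (Z @ n))"
    unfolding D_def by (metis concat.simps(2) distinct_append map_append)
  then have "distinct (map fst Z)" by simp
  then have "Z = [] \<or> closed_trail_at E endp b Z"
    unfolding Z_def by (rule closed_trail_at_concat[rotated]) (use closed in simp)
  then have Zn: "closed_trail_at E endp b (Z @ n)"
    using closed n dist by (metis append_Nil closed_trail_at_append)
  have "weight \<gamma> Z = 0" unfolding Z_def weight_concat by (induction F) (auto simp: nonzero_def)
  then have "\<forall>c\<in>set D. nonzero \<gamma> c" using n rest by (simp add: nonzero_def D_def)
  moreover have closed_D: "\<forall>c\<in>set D. closed_trail_at E endp b c" using Zn rest closed by (simp add: D_def)
  then have "\<forall>c\<in>set D. hits endp c b" using closed_trail_at_hits by metis
  moreover have "circuit_decomposition E endp D"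
    using circuit_decomposition_mset_cong[OF FD m] closed_D by (simp add: closed_trail_at_def circuit_def)
  ultimately have "good_decomposition E endp \<gamma> b D" by (simp add: good_decomposition_def)
  moreover have "length D = num_nonzero \<gamma> F" using N by (simp add: D_def num_nonzero_def)
  ultimately show ?thesis by blast
qed

lemma good_decomposition_length_le:
  assumes "good_decomposition E endp \<gamma> b D"
  shows "length D \<le> card E"
proof -
  have nonempty: "\<forall>c\<in>set D. c \<noteq> []"
    and "distinct (map fst (concat D))" "set (map fst (concat D)) = E"
    using assms by (auto simp: good_decomposition_def circuit_decomposition_alt circuit_def trail_def)
  then have "length (concat D) = card E" by (metis distinct_card length_map)
  moreover have "length D \<le> length (concat D)"
    using nonempty
  proof (induction D)
    case (Cons c D)
    then have "length D \<le> length (concat D)" "0 < length c" by simp_all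
    then show ?case unfolding length_Cons concat.simps length_append by linarith
  qed simp
  ultimately show ?thesis by simp
qed

lemma finite_good_decomposition_lengths:
  "finite E \<Longrightarrow> finite {length D | D. good_decomposition E endp \<gamma> b D}"
  by (rule finite_subset[of _ "{..card E}"]) (auto dest: good_decomposition_length_le)

lemma length_le_flooding_number:
  assumes "finite E" and "good_decomposition E endp \<gamma> b D"
  shows "length D \<le> flooding_number E endp \<gamma> b"
proof -
  let ?S = "{length D | D. good_decomposition E endp \<gamma> b D}"
  have "length D \<in> ?S" using assms(2) by blast
  then have "length D \<le> Max ?S" by (rule Max_ge[OF finite_good_decomposition_lengths[OF assms(1)]])
  then show ?thesis using assms(2) by (auto simp: flooding_number_def)
qed

lemma flooding_number_attained:
  assumes "finite E" and "good_decomposition E endp \<gamma> b D"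
  shows "\<exists>D'. good_decomposition E endp \<gamma> b D' \<and> length D' = flooding_number E endp \<gamma> b"
proof -
  let ?S = "{length D | D. good_decomposition E endp \<gamma> b D}"
  have "Max ?S \<in> ?S"
    using finite_good_decomposition_lengths[OF assms(1)] assms(2) by (intro Max_in) auto
  then show ?thesis using assms(2) by (auto simp: flooding_number_def)
qed

lemma num_nonzero_le_flooding_number:
  assumes fin: "finite E" and F: "flooding E endp b F"
  shows "num_nonzero \<gamma> F \<le> flooding_number E endp \<gamma> b"
proof (cases "0 < num_nonzero \<gamma> F")
  case True
  then obtain D where "good_decomposition E endp \<gamma> b D" "length D = num_nonzero \<gamma> F"
    using good_decomposition_from_flooding[OF F] by blast
  then show ?thesis using length_le_flooding_number[OF fin] by metis
qed simp

lemma eulerian_decomposition_through: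
  assumes "eulerian V E endp" and "b \<in> V"
  shows "\<exists>D. circuit_decomposition E endp D \<and> (\<forall>c\<in>set D. hits endp c b)"
proof -
  have G: "graph V E endp" and "connected_graph V E endp" and "finite E"
    using assms(1) by (simp_all add: eulerian_def graph_def)
  moreover have "even (deg E endp v)" for v
    using assms(1) deg_outside_graph[OF G, of v] by (cases "v \<in> V") (auto simp: eulerian_def)
  ultimately obtain D where "circuit_decomposition E endp D" using circuit_decomposition_exists by blast
  then show ?thesis using circuit_decomposition_through[OF G _ assms(2)] \<open>connected_graph V E endp\<close> by blast
qed

lemma flooding_attaining_flooding_number:
  assumes eu: "eulerian V E endp" and b: "b \<in> V"
  shows "\<exists>F. flooding E endp b F \<and> flooding_number E endp \<gamma> b \<le> num_nonzero \<gamma> F"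
proof -
  have fin: "finite E" using eu by (simp add: eulerian_def graph_def)
  show ?thesis
  proof (cases "\<exists>D. good_decomposition E endp \<gamma> b D")
    case True
    then obtain D0 where "good_decomposition E endp \<gamma> b D0" by blast
    then obtain D where D: "good_decomposition E endp \<gamma> b D" "length D = flooding_number E endp \<gamma> b"
      using flooding_number_attained[OF fin] by meson
    then have "circuit_decomposition E endp D" "\<forall>c\<in>set D. hits endp c b"
      and "num_nonzero \<gamma> D = flooding_number E endp \<gamma> b"
      by (simp_all add: good_decomposition_def num_nonzero_def)
    then show ?thesis using flooding_from_decomposition[OF fin] by metis
  next
    case False
    then have "flooding_number E endp \<gamma> b = 0" by (simp add: flooding_number_def)
    moreover obtain D where "circuit_decomposition E endp D" "\<forall>c\<in>set D. hits endp c b"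
      using eulerian_decomposition_through[OF eu b] by blast
    ultimately show ?thesis using flooding_from_decomposition[OF fin, of endp D b \<gamma>] by auto
  qed
qed

theorem mainTheorem3:
  fixes V :: "'v set" and E :: "'e set" and endp :: "'e \<Rightarrow> bool \<Rightarrow> 'v"
    and \<gamma> :: "'e \<Rightarrow> bit" and b :: 'v
  assumes "res_graph V E endp \<gamma> b"
  shows "(\<exists>F. flooding E endp b F \<and> num_nonzero \<gamma> F = flooding_number E endp \<gamma> b) \<and>
         (\<forall>F. flooding E endp b F \<longrightarrow> num_nonzero \<gamma> F \<le> flooding_number E endp \<gamma> b)"
proof -
  have eu: "eulerian V E endp" and b: "b \<in> V" using assms by (simp_all add: res_graph_def)
  then have fin: "finite E" by (simp add: eulerian_def graph_def)
  obtain F where F: "flooding E endp b F" "flooding_number E endp \<gamma> b \<le> num_nonzero \<gamma> F"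
    using flooding_attaining_flooding_number[OF eu b] by blast
  then have "num_nonzero \<gamma> F = flooding_number E endp \<gamma> b"
    using num_nonzero_le_flooding_number[OF fin F(1), of \<gamma>] by simp
  moreover have "\<forall>F. flooding E endp b F \<longrightarrow> num_nonzero \<gamma> F \<le> flooding_number E endp \<gamma> b"
    by (intro allI impI num_nonzero_le_flooding_number[OF fin])
  ultimately show ?thesis using F(1) by blast
qed

end
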